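(* For every integer $a\geq 1$, $$\sigma(2,2a-1)=2a(2a-1)\lambda(2a+1)-8\sum_{j=1}^{a-1}j\,\lambda(2a-2j)\lambda(2j+1),$$ where an empty sum equals $0$.
   Context: For integers $t\geq 1$ and $n\geq 1$ let $S_n^{(t)}=\sum_{k=1}^{n}\frac{1}{(2k-1)^t}$, and for integers $s\geq 2$, $t\geq 1$ let $\sigma(s,t)=\sum_{n\geq 1}\frac{S_n^{(t)}}{n^s}$. For real $s>1$, $\lambda(s)=\sum_{n\geq 1}\frac{1}{(2n-1)^s}=(1-2^{-s})\zeta(s)$. *)

theory Defs
  imports "HOL-Analysis.Analysis"
begin

definition S_odd :: "nat \<Rightarrow> nat \<Rightarrow> real" where
  "S_odd t n = (\<Sum>k=1..n. 1 / (2 * real k - 1) ^ t)"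

definition sigma_os :: "nat \<Rightarrow> nat \<Rightarrow> real" where
  "sigma_os s t = (\<Sum>n. S_odd t (n + 1) / (real (n + 1)) ^ s)"

definition dlambda :: "real \<Rightarrow> real" where
  "dlambda s = (\<Sum>n. 1 / (2 * real n + 1) powr s)"

end

theory Submission
  imports Defs "HOL-Real_Asymp.Real_Asymp"
begin

text \<open>
  With x(k) = 1/(2k+1) and y(m) = 1/(2m+2) one has sigma(2,t) = 4 W, where W is the sum of
  x(k)^t y(m)^2 over the triangle k <= m.  Group the pairs (k,m) by the odd number N = 2n+1
  according to whether (2m+2) - (2k+1) = N (the triangle), (2k+1) - (2m+2) = N (its complement)
  or (2k+1) + (2m+2) = N (finitely many pairs).  On each class x y = (x +- y)/N, so x^t y^2
  splits into partial fractions whose sums are lambda-values, finite power sums and harmonic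
  tails; the finite power sums cancel between the classes and the harmonic tails add up to -1/N.
  Summing over n, the antidiagonal classes exhaust the full product P = lambda(t) * sum y(m)^2,
  and so do the triangle and its complement together; the three classes combined therefore
  give 2 (P - W).  For t = 1 the product P diverges; there one symmetrises the triangle sum
  instead, x(k) y(n+k)^2 + x(n) y(n+k)^2 = x(n) x(k) y(n+k), and runs the same argument with a
  convergent companion kernel.
\<close>

lemma summable_one_over_linear_power:
  assumes "2 \<le> s" and "1 \<le> b"
  shows "summable (\<lambda>k::nat. (1 / (2 * real k + b)) ^ s)"
proof (rule summable_comparison_test)
  have "summable (\<lambda>k. inverse (real k ^ s))"
    using inverse_power_summable assms(1) by blast
  then show "summable (\<lambda>k. inverse (real (Suc k) ^ s))"
    by (subst summable_Suc_iff)
  show "\<exists>N. \<forall>k\<ge>N. norm ((1 / (2 * real k + b)) ^ s) \<le> inverse (real (Suc k) ^ s)"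
  proof (intro exI allI impI)
    fix k :: nat
    have "(1 / (2 * real k + b)) ^ s \<le> (1 / real (Suc k)) ^ s"
      using assms(2) by (intro power_mono divide_left_mono) auto
    then show "norm ((1 / (2 * real k + b)) ^ s) \<le> inverse (real (Suc k) ^ s)"
      using assms(2) by (simp add: power_one_over inverse_eq_divide)
  qed
qed

definition dlambda_nat :: "nat \<Rightarrow> real" where
  "dlambda_nat s = (\<Sum>k. (1 / (2 * real k + 1)) ^ s)"

definition even_inverse_square_sum :: real where
  "even_inverse_square_sum = (\<Sum>m. (1 / (2 * real m + 2)) ^ 2)"

lemma dlambda_nat_sums: "2 \<le> s \<Longrightarrow> (\<lambda>k. (1 / (2 * real k + 1)) ^ s) sums dlambda_nat s"
  unfolding dlambda_nat_def by (intro summable_sums summable_one_over_linear_power) auto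

lemma even_inverse_square_sum_sums:
  "(\<lambda>m. (1 / (2 * real m + 2)) ^ 2) sums even_inverse_square_sum"
  unfolding even_inverse_square_sum_def
  by (intro summable_sums summable_one_over_linear_power) auto

lemma dlambda_of_nat: "dlambda (real s) = dlambda_nat s"
  unfolding dlambda_def dlambda_nat_def
  by (intro suminf_cong) (simp add: powr_realpow power_one_over)

lemma S_odd_Suc: "S_odd t (Suc m) = (\<Sum>k\<le>m. (1 / (2 * real k + 1)) ^ t)"
proof -
  have "S_odd t (Suc m) = (\<Sum>k=Suc 0..Suc m. 1 / (2 * real k - 1) ^ t)"
    unfolding S_odd_def by simp
  also have "\<dots> = (\<Sum>k=0..m. 1 / (2 * real (Suc k) - 1) ^ t)"
    by (subst sum.atLeast_Suc_atMost_Suc_shift) (simp add: o_def)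
  also have "\<dots> = (\<Sum>k\<le>m. (1 / (2 * real k + 1)) ^ t)"
    by (intro sum.cong) (auto simp: atLeast0AtMost power_one_over add.commute)
  finally show ?thesis .
qed

lemma sum_lessThan_double: "(\<Sum>j<2 * (n::nat). f j) = (\<Sum>k<n. f (2 * k) + f (2 * k + 1))"
  by (induction n) (auto simp: sum.distrib add_ac)

lemma sum_real_diff_lessThan: "(\<Sum>i<q. real (q - i)) = real q * (real q + 1) / 2"
proof (induction q)
  case (Suc q)
  have "(\<Sum>i<Suc q. real (Suc q - i)) = real (Suc q) + (\<Sum>i<q. real (q - i))"
    by (subst sum.lessThan_Suc_shift) simp
  with Suc show ?case by (simp add: field_simps)
qed simp

section \<open>Partial fractions\<close>

lemma partial_fraction_add:
  fixes x y N :: real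
  assumes "x \<noteq> 0" "y \<noteq> 0" "x + y = N" "N \<noteq> 0"
  shows "(1 / x) * (1 / y) = (1 / N) * (1 / x + 1 / y)"
  using assms by (auto simp: field_simps)

lemma partial_fraction_diff:
  fixes x y N :: real
  assumes "x \<noteq> 0" "y \<noteq> 0" "y - x = N" "N \<noteq> 0"
  shows "(1 / x) * (1 / y) = (1 / N) * (1 / x - 1 / y)"
  using assms by (auto simp: field_simps)

lemma partial_fraction_symmetric:
  fixes u v :: real
  assumes "0 < u" and "0 < v"
  shows "1 / u * (1 / v * (1 / (u + v))) = 1 / u * (1 / (u + v)) ^ 2 + 1 / v * (1 / (u + v)) ^ 2"
proof -
  have "1 / u * (1 / (u + v)) ^ 2 + 1 / v * (1 / (u + v)) ^ 2 = (1 / u + 1 / v) * (1 / (u + v)) ^ 2"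
    by (simp add: algebra_simps)
  also have "1 / u + 1 / v = (u + v) * (1 / u * (1 / v))"
    using assms by (simp add: field_simps)
  finally show ?thesis
    using assms by (simp add: power2_eq_square)
qed

lemma power_mult_square_partial_fraction:
  fixes c d e :: real
  assumes cd: "c * d = e * (c + d)"
  shows "c ^ Suc q * d ^ 2 = (\<Sum>i<q. real (q - i) * c ^ (i + 2) * e ^ (q + 1 - i))
          + real (q + 1) * e ^ (q + 2) * (c + d) + e ^ (q + 1) * d ^ 2"
proof -
  have "c * d ^ 2 = (c * d) * d"
    by (simp add: power2_eq_square)
  also have "\<dots> = e * (c + d) * d"
    by (simp only: cd)
  also have "\<dots> = e * (c * d) + e * d ^ 2"
    by (simp add: power2_eq_square algebra_simps)
  also have "\<dots> = e ^ 2 * (c + d) + e * d ^ 2"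
    by (simp only: cd) (simp add: power2_eq_square)
  finally have base: "c * d ^ 2 = e ^ 2 * (c + d) + e * d ^ 2" .
  show ?thesis
  proof (induction q)
    case 0
    show ?case using base by (simp add: power2_eq_square)
  next
    case (Suc q)
    have shift: "c * (\<Sum>i<q. real (q - i) * c ^ (i + 2) * e ^ (q + 1 - i))
        = (\<Sum>i<q. real (q - i) * c ^ (i + 3) * e ^ (q + 1 - i))"
      unfolding sum_distrib_left by (intro sum.cong) (auto simp: eval_nat_numeral)
    have "c ^ Suc (Suc q) * d ^ 2 = c * (c ^ Suc q * d ^ 2)"
      by simp
    also have "\<dots> = (\<Sum>i<q. real (q - i) * c ^ (i + 3) * e ^ (q + 1 - i))
        + real (q + 1) * e ^ (q + 2) * c ^ 2 + real (q + 1) * e ^ (q + 2) * (c * d)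
        + e ^ (q + 1) * (c * d ^ 2)"
      unfolding Suc.IH shift[symmetric] by (simp add: algebra_simps power2_eq_square)
    also have "\<dots> = (\<Sum>i<q. real (q - i) * c ^ (i + 3) * e ^ (q + 1 - i))
        + real (q + 1) * e ^ (q + 2) * c ^ 2 + real (q + 2) * e ^ (q + 3) * (c + d)
        + e ^ (q + 2) * d ^ 2"
      unfolding cd base by (simp add: algebra_simps power_add eval_nat_numeral)
    also have "(\<Sum>i<q. real (q - i) * c ^ (i + 3) * e ^ (q + 1 - i))
        + real (q + 1) * e ^ (q + 2) * c ^ 2
        = (\<Sum>i<Suc q. real (Suc q - i) * c ^ (i + 2) * e ^ (Suc q + 1 - i))"
      by (subst sum.lessThan_Suc_shift) (simp add: power2_eq_square eval_nat_numeral)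
    finally show ?case
      by (simp add: add_ac eval_nat_numeral)
  qed
qed

lemma sums_power_mult_square_partial_fraction:
  fixes c d :: "nat \<Rightarrow> real" and e :: real
  assumes cd: "\<And>k. c k * d k = e * (c k + d k)"
    and P: "\<And>i. i < q \<Longrightarrow> (\<lambda>k. c k ^ (i + 2)) sums P i"
    and Q: "(\<lambda>k. c k + d k) sums Q" and R: "(\<lambda>k. d k ^ 2) sums R"
  shows "(\<lambda>k. c k ^ Suc q * d k ^ 2) sums
    ((\<Sum>i<q. real (q - i) * P i * e ^ (q + 1 - i)) + real (q + 1) * e ^ (q + 2) * Q + e ^ (q + 1) * R)"
proof -
  have "(\<lambda>k. \<Sum>i<q. real (q - i) * c k ^ (i + 2) * e ^ (q + 1 - i))
      sums (\<Sum>i<q. real (q - i) * P i * e ^ (q + 1 - i))"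
    using P by (intro sums_sum sums_mult sums_mult2) auto
  then show ?thesis
    unfolding power_mult_square_partial_fraction[OF cd]
    by (intro sums_add sums_mult Q R)
qed

lemma sum_power_mult_square_partial_fraction:
  fixes c d :: "nat \<Rightarrow> real" and e :: real
  assumes cd: "\<And>k. k < n \<Longrightarrow> c k * d k = e * (c k + d k)"
  shows "(\<Sum>k<n. c k ^ Suc q * d k ^ 2)
    = (\<Sum>i<q. real (q - i) * (\<Sum>k<n. c k ^ (i + 2)) * e ^ (q + 1 - i))
      + real (q + 1) * e ^ (q + 2) * (\<Sum>k<n. c k + d k) + e ^ (q + 1) * (\<Sum>k<n. d k ^ 2)"
proof -
  have "(\<Sum>k<n. c k ^ Suc q * d k ^ 2)
      = (\<Sum>k<n. (\<Sum>i<q. real (q - i) * c k ^ (i + 2) * e ^ (q + 1 - i))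
          + real (q + 1) * e ^ (q + 2) * (c k + d k) + e ^ (q + 1) * d k ^ 2)"
    using cd by (intro sum.cong refl power_mult_square_partial_fraction) simp
  also have "\<dots> = (\<Sum>k<n. \<Sum>i<q. real (q - i) * c k ^ (i + 2) * e ^ (q + 1 - i))
      + real (q + 1) * e ^ (q + 2) * (\<Sum>k<n. c k + d k) + e ^ (q + 1) * (\<Sum>k<n. d k ^ 2)"
    by (simp only: sum.distrib flip: sum_distrib_left)
  also have "(\<Sum>k<n. \<Sum>i<q. real (q - i) * c k ^ (i + 2) * e ^ (q + 1 - i))
      = (\<Sum>i<q. real (q - i) * (\<Sum>k<n. c k ^ (i + 2)) * e ^ (q + 1 - i))"
    by (subst sum.swap) (simp add: sum_distrib_left sum_distrib_right)
  finally show ?thesis .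
qed

section \<open>Harmonic tails\<close>

lemma has_sum_even_odd_split:
  fixes g :: "nat \<Rightarrow> 'a::banach"
  assumes "(g has_sum S) UNIV"
  obtains S\<^sub>e S\<^sub>o where "(\<lambda>k. g (2 * k)) sums S\<^sub>e" and "(\<lambda>k. g (2 * k + 1)) sums S\<^sub>o"
    and "S\<^sub>e + S\<^sub>o = S"
proof -
  let ?E = "range (\<lambda>k::nat. 2 * k)" and ?O = "range (\<lambda>k::nat. 2 * k + 1)"
  have "g summable_on ?E" "g summable_on ?O"
    using has_sum_imp_summable[OF assms] by (auto intro: summable_on_subset_banach)
  then have hE: "(g has_sum infsum g ?E) ?E" and hO: "(g has_sum infsum g ?O) ?O"
    by (auto intro: has_sum_infsum)
  have "?E \<union> ?O = UNIV"
    by (auto elim!: oddE simp: image_iff) presburger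
  moreover have "?E \<inter> ?O = {}"
    by auto presburger
  ultimately have "(g has_sum (infsum g ?E + infsum g ?O)) UNIV"
    using has_sum_Un_disjoint[OF hE hO] by simp
  then have "infsum g ?E + infsum g ?O = S"
    using assms has_sum_unique by blast
  moreover have "(\<lambda>k. g (2 * k)) sums infsum g ?E" "(\<lambda>k. g (2 * k + 1)) sums infsum g ?O"
    using hE hO by (auto intro!: has_sum_imp_sums simp: has_sum_reindex inj_on_def o_def)
  ultimately show ?thesis
    using that by blast
qed

lemma sums_shifted_inverse_diff:
  "(\<lambda>j. 1 / (real j + 1 + real M) - 1 / (real j + 1)) sums (- (\<Sum>i<M. 1 / (real i + 1)))"
proof -
  define F where "F j = (\<Sum>i<M. 1 / (real j + real i + 1))" for j :: nat
  have step: "F (Suc j) - F j = 1 / (real j + 1 + real M) - 1 / (real j + 1)" for j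
  proof -
    have "F (Suc j) - F j = (\<Sum>i<M. 1 / (real j + real (Suc i) + 1) - 1 / (real j + real i + 1))"
      unfolding F_def by (simp add: sum_subtractf add_ac)
    also have "\<dots> = 1 / (real j + real M + 1) - 1 / (real j + real 0 + 1)"
      by (rule sum_lessThan_telescope)
    finally show ?thesis
      by (simp add: add_ac)
  qed
  have "F \<longlonglongrightarrow> 0"
    unfolding F_def by (intro tendsto_null_sum) real_asymp
  then have "(\<lambda>j. F (Suc j) - F j) sums (0 - F 0)"
    by (rule telescope_sums)
  then show ?thesis
    unfolding step by (simp add: F_def)
qed

lemma sum_lessThan_reflect:
  "(\<Sum>k<n. f (2 * real n - 2 * real k)) = (\<Sum>k<n. f (2 * real k + 2))"
proof -
  have "(\<Sum>k<n. f (2 * real n - 2 * real k)) = (\<Sum>k<n. f (2 * real (n - Suc k) + 2))"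
    by (intro sum.cong) (auto simp: of_nat_diff)
  also have "\<dots> = (\<Sum>k<n. f (2 * real k + 2))"
    by (rule sum.nat_diff_reindex)
  finally show ?thesis .
qed

text \<open>The telescoping sum above with M = 2n + 1, split into odd and even denominators.\<close>

lemma harmonic_tails:
  fixes n :: nat
  obtains T\<^sub>o T\<^sub>e where
    "(\<lambda>k. 1 / (2 * real n + 2 * real k + 2) - 1 / (2 * real k + 1)) sums T\<^sub>o"
    "(\<lambda>m. 1 / (2 * real n + 2 * real m + 3) - 1 / (2 * real m + 2)) sums T\<^sub>e"
    "T\<^sub>o + T\<^sub>e + (\<Sum>k<n. 1 / (2 * real k + 1) + 1 / (2 * real n - 2 * real k)) = - 1 / (2 * real n + 1)"
proof -
  define g where "g j = 1 / (real j + 1 + real (2 * n + 1)) - 1 / (real j + 1)" for j :: nat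
  define H where "H = (\<Sum>i<2 * n + 1. 1 / (real i + 1))"
  have "(\<lambda>j. - g j) sums H"
    using sums_minus[OF sums_shifted_inverse_diff[of "2 * n + 1"]] unfolding g_def H_def
    by (simp only: minus_minus)
  then have "((\<lambda>j. - g j) has_sum H) UNIV"
    by (rule sums_nonneg_imp_has_sum) (simp add: g_def frac_le)
  then have "(g has_sum - H) UNIV"
    using has_sum_uminusI by fastforce
  then obtain T\<^sub>o T\<^sub>e where To: "(\<lambda>k. g (2 * k)) sums T\<^sub>o" and Te: "(\<lambda>k. g (2 * k + 1)) sums T\<^sub>e"
    and TH: "T\<^sub>o + T\<^sub>e = - H"
    by (rule has_sum_even_odd_split)
  have "H = (\<Sum>j<2 * n. 1 / (real j + 1)) + 1 / (2 * real n + 1)"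
    unfolding H_def by simp
  also have "(\<Sum>j<2 * n. 1 / (real j + 1)) = (\<Sum>k<n. 1 / (2 * real k + 1) + 1 / (2 * real k + 2))"
    by (subst sum_lessThan_double) (simp add: add_ac)
  finally have fin: "(\<Sum>k<n. 1 / (2 * real k + 1) + 1 / (2 * real n - 2 * real k)) + 1 / (2 * real n + 1) = H"
    using sum_lessThan_reflect[of "\<lambda>x. 1 / x" n] by (simp add: sum.distrib)
  show ?thesis
  proof (rule that)
    show "(\<lambda>k. 1 / (2 * real n + 2 * real k + 2) - 1 / (2 * real k + 1)) sums T\<^sub>o"
      using To by (simp add: g_def add_ac)
    show "(\<lambda>m. 1 / (2 * real n + 2 * real m + 3) - 1 / (2 * real m + 2)) sums T\<^sub>e"
      using Te by (simp add: g_def add_ac)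
  qed (use TH fin in linarith)
qed

section \<open>Double series over pairs of natural numbers\<close>

lemma nonneg_iterated_sums_imp_has_sum:
  fixes f :: "nat \<times> nat \<Rightarrow> real"
  assumes nonneg: "\<And>x. 0 \<le> f x" and inner: "\<And>k. (\<lambda>m. f (k, m)) sums g k"
    and outer: "g sums S"
  shows "(f has_sum S) UNIV"
proof -
  have inner': "((\<lambda>m. f (k, m)) has_sum g k) UNIV" for k
    by (rule sums_nonneg_imp_has_sum[OF inner]) (use nonneg in auto)
  have "0 \<le> g k" for k
    using sums_le[OF _ sums_zero inner] nonneg by auto
  then have outer': "(g has_sum S) UNIV"
    by (rule sums_nonneg_imp_has_sum[OF outer])
  have "f summable_on UNIV \<times> UNIV"
    using summable_on_SigmaI[OF inner' has_sum_imp_summable[OF outer']] nonneg by blast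
  then show ?thesis
    using has_sum_SigmaI[OF inner' outer'] by simp
qed

lemma has_sum_imp_row_sums:
  fixes f :: "nat \<times> nat \<Rightarrow> real"
  assumes "(f has_sum S) UNIV" and "\<And>x. 0 \<le> f x" and "\<And>k. (\<lambda>m. f (k, m)) sums r k"
  shows "r sums S"
proof -
  have "(f has_sum S) (UNIV \<times> UNIV)"
    using assms(1) by simp
  then have "(r has_sum S) UNIV"
    by (rule has_sum_Sigma') (use assms(2,3) in \<open>auto intro: sums_nonneg_imp_has_sum\<close>)
  then show ?thesis
    by (rule has_sum_imp_sums)
qed

lemma has_sum_imp_antidiagonal_sums:
  fixes f :: "nat \<times> nat \<Rightarrow> real"
  assumes "(f has_sum S) UNIV"
  shows "(\<lambda>n. \<Sum>k<n. f (k, n - 1 - k)) sums S"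
proof -
  have "((\<lambda>(n, k). f (k, n - 1 - k)) has_sum S) (SIGMA n:UNIV. {..<n})"
    by (subst has_sum_reindex_bij_witness[where i = "\<lambda>(k, m). (k + m + 1, k)"
          and j = "\<lambda>(n, k). (k, n - 1 - k)" and T = UNIV and h = f]) (auto simp: assms)
  then have "((\<lambda>n. \<Sum>k<n. f (k, n - 1 - k)) has_sum S) UNIV"
    by (rule has_sum_Sigma') (simp add: has_sum_finite)
  then show ?thesis
    by (rule has_sum_imp_sums)
qed

lemma has_sum_upper_triangle_iff:
  fixes f :: "nat \<times> nat \<Rightarrow> 'a::{comm_monoid_add, topological_space}"
  shows "(f has_sum W) {(k, m). k \<le> m} \<longleftrightarrow> ((\<lambda>(n, k). f (k, n + k)) has_sum W) UNIV"
  by (rule has_sum_reindex_bij_witness[where i = "\<lambda>(n, k). (k, n + k)" and j = "\<lambda>(k, m). (m - k, k)"])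
    auto

lemma has_sum_lower_triangle_iff:
  fixes f :: "nat \<times> nat \<Rightarrow> 'a::{comm_monoid_add, topological_space}"
  shows "(f has_sum C) {(k, m). m < k} \<longleftrightarrow> ((\<lambda>(n, m). f (n + m + 1, m)) has_sum C) UNIV"
  by (rule has_sum_reindex_bij_witness[where i = "\<lambda>(n, m). (n + m + 1, m)" and j = "\<lambda>(k, m). (k - m - 1, m)"])
    auto

lemma triangle_decomposition_sums:
  fixes f :: "nat \<times> nat \<Rightarrow> real"
  assumes nonneg: "\<And>x. 0 \<le> f x" and total: "(f has_sum P) UNIV"
    and upper: "\<And>n. (\<lambda>k. f (k, n + k)) sums A n"
    and lower: "\<And>n. (\<lambda>m. f (n + m + 1, m)) sums C n"
  shows "(\<lambda>n. C n + (\<Sum>k<n. f (k, n - 1 - k)) - A n) sums (2 * (P - infsum f {(k, m). k \<le> m}))"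
proof -
  define U V where "U = {(k::nat, m::nat). k \<le> m}" and "V = {(k::nat, m::nat). m < k}"
  have "f summable_on U" "f summable_on V"
    using has_sum_imp_summable[OF total] by (auto intro: summable_on_subset_banach)
  then have hU: "(f has_sum infsum f U) U" and hV: "(f has_sum infsum f V) V"
    by (auto intro: has_sum_infsum)
  have "(f has_sum (infsum f U + infsum f V)) (U \<union> V)"
    by (rule has_sum_Un_disjoint[OF hU hV]) (auto simp: U_def V_def)
  moreover have "U \<union> V = UNIV"
    by (auto simp: U_def V_def)
  ultimately have UV: "infsum f U + infsum f V = P"
    using total has_sum_unique by metis
  have "A sums infsum f U"
    using hU unfolding U_def has_sum_upper_triangle_iff
    by (rule has_sum_imp_row_sums) (use nonneg upper in auto)
  moreover have "C sums infsum f V"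
    using hV unfolding V_def has_sum_lower_triangle_iff
    by (rule has_sum_imp_row_sums) (use nonneg lower in auto)
  ultimately have "(\<lambda>n. C n + (\<Sum>k<n. f (k, n - 1 - k)) - A n) sums (infsum f V + P - infsum f U)"
    by (intro sums_diff sums_add has_sum_imp_antidiagonal_sums total)
  also have "infsum f V + P - infsum f U = 2 * (P - infsum f U)"
    by (simp add: algebra_simps flip: UV)
  finally show ?thesis
    unfolding U_def .
qed

definition odd_even_term :: "nat \<Rightarrow> nat \<times> nat \<Rightarrow> real" where
  "odd_even_term t = (\<lambda>(k, m). (1 / (2 * real k + 1)) ^ t * (1 / (2 * real m + 2)) ^ 2)"

lemma odd_even_term_nonneg: "0 \<le> odd_even_term t x"
  by (auto simp: odd_even_term_def split: prod.splits)

lemma sigma_os_two_eq_triangle_sum: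
  assumes "(odd_even_term t has_sum W) {(k, m). k \<le> m}"
  shows "sigma_os 2 t = 4 * W"
proof -
  have "((\<lambda>(m, k). odd_even_term t (k, m)) has_sum W) (SIGMA m:UNIV. {..m})"
    using assms
    by (subst has_sum_reindex_bij_witness[where i = "\<lambda>(m, k). (k, m)" and j = "\<lambda>(k, m). (m, k)"
          and T = "{(k, m). k \<le> m}" and h = "odd_even_term t"]) auto
  then have "((\<lambda>m. \<Sum>k\<le>m. odd_even_term t (k, m)) has_sum W) UNIV"
    by (rule has_sum_Sigma') (auto intro: has_sum_finite)
  then have "(\<lambda>m. 4 * (\<Sum>k\<le>m. odd_even_term t (k, m))) sums (4 * W)"
    by (intro sums_mult has_sum_imp_sums)
  moreover have "S_odd t (m + 1) / real (m + 1) ^ 2 = 4 * (\<Sum>k\<le>m. odd_even_term t (k, m))" for m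
  proof -
    have "(2 * real m + 2) ^ 2 = 4 * real (m + 1) ^ 2"
      by (simp add: power2_eq_square algebra_simps)
    then have "4 * (1 / (2 * real m + 2)) ^ 2 = 1 / real (m + 1) ^ 2"
      by (simp add: power_one_over)
    then show ?thesis
      by (simp add: S_odd_Suc odd_even_term_def flip: sum_distrib_right)
        (simp add: field_simps)
  qed
  ultimately show ?thesis
    unfolding sigma_os_def by (simp add: sums_iff)
qed

section \<open>Odd weight at least three\<close>

text \<open>Writing the three classes with signed terms c, d such that c d = e (c + d), e = 1/N,
  lets one partial fraction expansion serve all of them.\<close>

lemma upper_diagonal_sums:
  fixes n q :: nat
  defines "e \<equiv> 1 / (2 * real n + 1)"
  assumes T: "(\<lambda>k. 1 / (2 * real n + 2 * real k + 2) - 1 / (2 * real k + 1)) sums T"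
  shows "(\<lambda>k. (- 1 / (2 * real k + 1)) ^ Suc q * (1 / (2 * real n + 2 * real k + 2)) ^ 2) sums
    ((\<Sum>i<q. real (q - i) * ((- 1) ^ i * dlambda_nat (i + 2)) * e ^ (q + 1 - i))
      + real (q + 1) * e ^ (q + 2) * T
      + e ^ (q + 1) * (even_inverse_square_sum - (\<Sum>m<n. (1 / (2 * real m + 2)) ^ 2)))"
proof (rule sums_power_mult_square_partial_fraction)
  fix k
  have "(1 / (2 * real k + 1)) * (1 / (2 * real n + 2 * real k + 2))
      = e * (1 / (2 * real k + 1) - 1 / (2 * real n + 2 * real k + 2))"
    unfolding e_def by (rule partial_fraction_diff) auto
  then show "(- 1 / (2 * real k + 1)) * (1 / (2 * real n + 2 * real k + 2))
      = e * ((- 1 / (2 * real k + 1)) + (1 / (2 * real n + 2 * real k + 2)))"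
    by (simp add: minus_divide_left[symmetric] algebra_simps)
next
  fix i
  have "(\<lambda>k. (- 1) ^ (i + 2) * (1 / (2 * real k + 1)) ^ (i + 2)) sums ((- 1) ^ (i + 2) * dlambda_nat (i + 2))"
    by (intro sums_mult dlambda_nat_sums) simp
  moreover have "(- 1 / (2 * real k + 1)) ^ (i + 2) = (- 1) ^ (i + 2) * (1 / (2 * real k + 1)) ^ (i + 2)" for k
    by (subst power_minus[symmetric]) simp
  ultimately show "(\<lambda>k. (- 1 / (2 * real k + 1)) ^ (i + 2)) sums ((- 1) ^ i * dlambda_nat (i + 2))"
    by simp
next
  show "(\<lambda>k. (- 1 / (2 * real k + 1)) + (1 / (2 * real n + 2 * real k + 2))) sums T"
    using T by (simp add: add_ac)
next
  have "(\<lambda>k. (1 / (2 * real (k + n) + 2)) ^ 2)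
      sums (even_inverse_square_sum - (\<Sum>m<n. (1 / (2 * real m + 2)) ^ 2))"
    by (rule sums_split_initial_segment[OF even_inverse_square_sum_sums])
  then show "(\<lambda>k. (1 / (2 * real n + 2 * real k + 2)) ^ 2)
      sums (even_inverse_square_sum - (\<Sum>m<n. (1 / (2 * real m + 2)) ^ 2))"
    by (simp add: algebra_simps)
qed

lemma lower_diagonal_sums:
  fixes n q :: nat
  defines "e \<equiv> 1 / (2 * real n + 1)"
  assumes T: "(\<lambda>m. 1 / (2 * real n + 2 * real m + 3) - 1 / (2 * real m + 2)) sums T"
  shows "(\<lambda>m. (1 / (2 * real n + 2 * real m + 3)) ^ Suc q * (- 1 / (2 * real m + 2)) ^ 2) sums
    ((\<Sum>i<q. real (q - i) * (dlambda_nat (i + 2) - (\<Sum>k<n. (1 / (2 * real k + 1)) ^ (i + 2))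
        - e ^ (i + 2)) * e ^ (q + 1 - i))
      + real (q + 1) * e ^ (q + 2) * T + e ^ (q + 1) * even_inverse_square_sum)"
proof (rule sums_power_mult_square_partial_fraction)
  fix m
  have "(1 / (2 * real m + 2)) * (1 / (2 * real n + 2 * real m + 3))
      = e * (1 / (2 * real m + 2) - 1 / (2 * real n + 2 * real m + 3))"
    unfolding e_def by (rule partial_fraction_diff) auto
  then show "(1 / (2 * real n + 2 * real m + 3)) * (- 1 / (2 * real m + 2))
      = e * ((1 / (2 * real n + 2 * real m + 3)) + (- 1 / (2 * real m + 2)))"
    by (simp add: minus_divide_left[symmetric] algebra_simps)
next
  fix i
  have "(\<lambda>m. (1 / (2 * real (m + Suc n) + 1)) ^ (i + 2))
      sums (dlambda_nat (i + 2) - (\<Sum>k<Suc n. (1 / (2 * real k + 1)) ^ (i + 2)))"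
    by (rule sums_split_initial_segment[OF dlambda_nat_sums]) simp
  then show "(\<lambda>m. (1 / (2 * real n + 2 * real m + 3)) ^ (i + 2))
      sums (dlambda_nat (i + 2) - (\<Sum>k<n. (1 / (2 * real k + 1)) ^ (i + 2)) - e ^ (i + 2))"
    unfolding e_def by (simp add: algebra_simps)
next
  show "(\<lambda>m. (1 / (2 * real n + 2 * real m + 3)) + (- 1 / (2 * real m + 2))) sums T"
    using T by simp
next
  show "(\<lambda>m. (- 1 / (2 * real m + 2)) ^ 2) sums even_inverse_square_sum"
    using even_inverse_square_sum_sums by simp
qed

lemma antidiagonal_sum:
  fixes n q :: nat
  defines "e \<equiv> 1 / (2 * real n + 1)"
  shows "(\<Sum>k<n. (1 / (2 * real k + 1)) ^ Suc q * (1 / (2 * real n - 2 * real k)) ^ 2)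
    = (\<Sum>i<q. real (q - i) * (\<Sum>k<n. (1 / (2 * real k + 1)) ^ (i + 2)) * e ^ (q + 1 - i))
      + real (q + 1) * e ^ (q + 2) * (\<Sum>k<n. 1 / (2 * real k + 1) + 1 / (2 * real n - 2 * real k))
      + e ^ (q + 1) * (\<Sum>m<n. (1 / (2 * real m + 2)) ^ 2)"
proof -
  have "(1 / (2 * real k + 1)) * (1 / (2 * real n - 2 * real k))
      = e * ((1 / (2 * real k + 1)) + (1 / (2 * real n - 2 * real k)))" if "k < n" for k
    unfolding e_def by (rule partial_fraction_add) (use that in auto)
  then show ?thesis
    unfolding sum_lessThan_reflect[of "\<lambda>x. (1 / x) ^ 2", symmetric]
    by (rule sum_power_mult_square_partial_fraction)
qed

lemma sum_diff_mult_power_mult_power: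
  fixes e :: real
  shows "(\<Sum>i<q. real (q - i) * e ^ (i + 2) * e ^ (q + 1 - i)) = real q * (real q + 1) / 2 * e ^ (q + 3)"
proof -
  have "(\<Sum>i<q. real (q - i) * e ^ (i + 2) * e ^ (q + 1 - i)) = (\<Sum>i<q. real (q - i) * e ^ (q + 3))"
  proof (intro sum.cong refl)
    fix i assume "i \<in> {..<q}"
    then have "i + 2 + (q + 1 - i) = q + 3"
      by simp
    then show "real (q - i) * e ^ (i + 2) * e ^ (q + 1 - i) = real (q - i) * e ^ (q + 3)"
      by (metis mult.assoc power_add)
  qed
  also have "\<dots> = (\<Sum>i<q. real (q - i)) * e ^ (q + 3)"
    by (rule sum_distrib_right[symmetric])
  finally show ?thesis
    by (simp only: sum_real_diff_lessThan)
qed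

lemma diagonal_values_sum:
  fixes e E D B T\<^sub>o T\<^sub>e :: real and L P :: "nat \<Rightarrow> real"
  assumes T: "T\<^sub>o + T\<^sub>e + B = - e"
  shows "((\<Sum>i<q. real (q - i) * ((- 1) ^ i * L (i + 2)) * e ^ (q + 1 - i))
        + real (q + 1) * e ^ (q + 2) * T\<^sub>o + e ^ (q + 1) * (E - D))
      + ((\<Sum>i<q. real (q - i) * P i * e ^ (q + 1 - i)) + real (q + 1) * e ^ (q + 2) * B + e ^ (q + 1) * D)
      + ((\<Sum>i<q. real (q - i) * (L (i + 2) - P i - e ^ (i + 2)) * e ^ (q + 1 - i))
        + real (q + 1) * e ^ (q + 2) * T\<^sub>e + e ^ (q + 1) * E)
    = (\<Sum>i<q. real (q - i) * ((- 1) ^ i + 1) * L (i + 2) * e ^ (q + 1 - i))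
      - real ((q + 1) * (q + 2)) / 2 * e ^ (q + 3) + 2 * E * e ^ (q + 1)"
proof -
  have "(\<Sum>i<q. real (q - i) * ((- 1) ^ i * L (i + 2)) * e ^ (q + 1 - i))
      + (\<Sum>i<q. real (q - i) * P i * e ^ (q + 1 - i))
      + (\<Sum>i<q. real (q - i) * (L (i + 2) - P i - e ^ (i + 2)) * e ^ (q + 1 - i))
    = (\<Sum>i<q. real (q - i) * ((- 1) ^ i + 1) * L (i + 2) * e ^ (q + 1 - i))
      - (\<Sum>i<q. real (q - i) * e ^ (i + 2) * e ^ (q + 1 - i))"
    unfolding sum.distrib[symmetric] sum_subtractf[symmetric]
    by (intro sum.cong refl) (simp add: algebra_simps)
  moreover have "real (q + 1) * e ^ (q + 2) * T\<^sub>o + real (q + 1) * e ^ (q + 2) * B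
      + real (q + 1) * e ^ (q + 2) * T\<^sub>e = - real (q + 1) * e ^ (q + 3)"
  proof -
    have "real (q + 1) * e ^ (q + 2) * T\<^sub>o + real (q + 1) * e ^ (q + 2) * B
        + real (q + 1) * e ^ (q + 2) * T\<^sub>e = real (q + 1) * e ^ (q + 2) * (T\<^sub>o + T\<^sub>e + B)"
      by (simp add: algebra_simps)
    also have "\<dots> = - real (q + 1) * e ^ (q + 3)"
      unfolding T by (simp add: eval_nat_numeral algebra_simps)
    finally show ?thesis .
  qed
  moreover have "real q * (real q + 1) / 2 * e ^ (q + 3) + real (q + 1) * e ^ (q + 3)
      = real ((q + 1) * (q + 2)) / 2 * e ^ (q + 3)"
    by (simp add: field_simps)
  moreover have "e ^ (q + 1) * (E - D) + e ^ (q + 1) * D + e ^ (q + 1) * E = 2 * E * e ^ (q + 1)"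
    by (simp add: algebra_simps)
  ultimately show ?thesis
    using sum_diff_mult_power_mult_power[of q e] by linarith
qed

lemma diagonal_sums_identity:
  fixes n q :: nat
  assumes "even q"
  defines "f \<equiv> odd_even_term (Suc q)" and "e \<equiv> 1 / (2 * real n + 1)"
  shows "summable (\<lambda>k. f (k, n + k))" and "summable (\<lambda>m. f (n + m + 1, m))"
    and "(\<Sum>m. f (n + m + 1, m)) + (\<Sum>k<n. f (k, n - 1 - k)) - (\<Sum>k. f (k, n + k))
      = (\<Sum>i<q. real (q - i) * ((- 1) ^ i + 1) * dlambda_nat (i + 2) * e ^ (q + 1 - i))
        - real ((q + 1) * (q + 2)) / 2 * e ^ (q + 3) + 2 * even_inverse_square_sum * e ^ (q + 1)"
proof -
  let ?E = even_inverse_square_sum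
  define P where "P i = (\<Sum>k<n. (1 / (2 * real k + 1)) ^ (i + 2))" for i
  define D where "D = (\<Sum>m<n. (1 / (2 * real m + 2)) ^ 2)"
  define B where "B = (\<Sum>k<n. 1 / (2 * real k + 1) + 1 / (2 * real n - 2 * real k))"
  obtain T\<^sub>o T\<^sub>e where To: "(\<lambda>k. 1 / (2 * real n + 2 * real k + 2) - 1 / (2 * real k + 1)) sums T\<^sub>o"
    and Te: "(\<lambda>m. 1 / (2 * real n + 2 * real m + 3) - 1 / (2 * real m + 2)) sums T\<^sub>e"
    and T: "T\<^sub>o + T\<^sub>e + B = - e"
    unfolding B_def e_def by (rule harmonic_tails) simp
  have odd_power: "(- 1 / (2 * real k + 1)) ^ Suc q = - ((1 / (2 * real k + 1)) ^ Suc q)" for k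
    using \<open>even q\<close> by (simp add: minus_divide_left[symmetric] power_minus_odd)
  define VA where "VA = (\<Sum>i<q. real (q - i) * ((- 1) ^ i * dlambda_nat (i + 2)) * e ^ (q + 1 - i))
      + real (q + 1) * e ^ (q + 2) * T\<^sub>o + e ^ (q + 1) * (?E - D)"
  define VC where "VC = (\<Sum>i<q. real (q - i) * (dlambda_nat (i + 2) - P i - e ^ (i + 2)) * e ^ (q + 1 - i))
      + real (q + 1) * e ^ (q + 2) * T\<^sub>e + e ^ (q + 1) * ?E"
  have "(\<lambda>k. - f (k, n + k)) sums VA"
    using upper_diagonal_sums[OF To, of q]
    unfolding VA_def D_def e_def f_def odd_even_term_def odd_power by (simp add: add_ac)
  then have A: "(\<lambda>k. f (k, n + k)) sums - VA"
    using sums_minus by fastforce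
  have C: "(\<lambda>m. f (n + m + 1, m)) sums VC"
    using lower_diagonal_sums[OF Te, of q]
    unfolding VC_def P_def e_def f_def odd_even_term_def by (simp add: add_ac)
  have "(\<Sum>k<n. f (k, n - 1 - k)) = (\<Sum>k<n. (1 / (2 * real k + 1)) ^ Suc q * (1 / (2 * real n - 2 * real k)) ^ 2)"
    unfolding f_def odd_even_term_def by (intro sum.cong) (auto simp: of_nat_diff)
  also have "\<dots> = (\<Sum>i<q. real (q - i) * P i * e ^ (q + 1 - i))
      + real (q + 1) * e ^ (q + 2) * B + e ^ (q + 1) * D"
    unfolding antidiagonal_sum P_def B_def D_def e_def ..
  finally have antidiagonal: "(\<Sum>k<n. f (k, n - 1 - k)) = (\<Sum>i<q. real (q - i) * P i * e ^ (q + 1 - i))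
      + real (q + 1) * e ^ (q + 2) * B + e ^ (q + 1) * D" .
  have "VA + (\<Sum>k<n. f (k, n - 1 - k)) + VC
      = (\<Sum>i<q. real (q - i) * ((- 1) ^ i + 1) * dlambda_nat (i + 2) * e ^ (q + 1 - i))
        - real ((q + 1) * (q + 2)) / 2 * e ^ (q + 3) + 2 * ?E * e ^ (q + 1)"
    unfolding antidiagonal VA_def VC_def by (rule diagonal_values_sum[OF T])
  with A C show "summable (\<lambda>k. f (k, n + k))" "summable (\<lambda>m. f (n + m + 1, m))"
    and "(\<Sum>m. f (n + m + 1, m)) + (\<Sum>k<n. f (k, n - 1 - k)) - (\<Sum>k. f (k, n + k))
      = (\<Sum>i<q. real (q - i) * ((- 1) ^ i + 1) * dlambda_nat (i + 2) * e ^ (q + 1 - i))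
        - real ((q + 1) * (q + 2)) / 2 * e ^ (q + 3) + 2 * ?E * e ^ (q + 1)"
    by (auto simp: sums_iff)
qed

lemma sigma_os_two_Suc_even:
  fixes q :: nat
  assumes "even q" and "2 \<le> q"
  shows "sigma_os 2 (Suc q) = real ((q + 1) * (q + 2)) * dlambda_nat (q + 3)
    - 2 * (\<Sum>i<q. real (q - i) * ((- 1) ^ i + 1) * dlambda_nat (i + 2) * dlambda_nat (q + 1 - i))"
proof -
  let ?f = "odd_even_term (Suc q)" and ?E = even_inverse_square_sum
  let ?e = "\<lambda>n::nat. 1 / (2 * real n + 1)"
  define W where "W = infsum ?f {(k, m). k \<le> m}"
  define R where "R = (\<Sum>i<q. real (q - i) * ((- 1) ^ i + 1) * dlambda_nat (i + 2) * dlambda_nat (q + 1 - i))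
    - real ((q + 1) * (q + 2)) / 2 * dlambda_nat (q + 3) + 2 * ?E * dlambda_nat (q + 1)"
  have total: "(?f has_sum dlambda_nat (Suc q) * ?E) UNIV"
  proof (rule nonneg_iterated_sums_imp_has_sum[OF odd_even_term_nonneg])
    show "(\<lambda>m. ?f (k, m)) sums (?e k ^ Suc q * ?E)" for k
      unfolding odd_even_term_def case_prod_conv by (rule sums_mult[OF even_inverse_square_sum_sums])
    show "(\<lambda>k. ?e k ^ Suc q * ?E) sums (dlambda_nat (Suc q) * ?E)"
      using assms by (intro sums_mult2 dlambda_nat_sums) simp
  qed
  have "(\<lambda>n. (\<Sum>m. ?f (n + m + 1, m)) + (\<Sum>k<n. ?f (k, n - 1 - k)) - (\<Sum>k. ?f (k, n + k)))
      sums (2 * (dlambda_nat (Suc q) * ?E - W))"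
    unfolding W_def using diagonal_sums_identity(1,2)[OF \<open>even q\<close>]
    by (intro triangle_decomposition_sums[OF odd_even_term_nonneg total] summable_sums)
  moreover have "(\<lambda>n. (\<Sum>i<q. real (q - i) * ((- 1) ^ i + 1) * dlambda_nat (i + 2) * ?e n ^ (q + 1 - i))
      - real ((q + 1) * (q + 2)) / 2 * ?e n ^ (q + 3) + 2 * ?E * ?e n ^ (q + 1)) sums R"
    unfolding R_def using assms
    by (intro sums_add sums_diff sums_sum sums_mult dlambda_nat_sums) auto
  ultimately have "2 * (dlambda_nat (Suc q) * ?E - W) = R"
    unfolding diagonal_sums_identity(3)[OF \<open>even q\<close>] using sums_unique2 by blast
  moreover have "sigma_os 2 (Suc q) = 4 * W"
    unfolding W_def
    by (intro sigma_os_two_eq_triangle_sum has_sum_infsum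
        summable_on_subset_banach[OF has_sum_imp_summable[OF total]]) auto
  ultimately show ?thesis
    unfolding R_def by (simp add: algebra_simps)
qed

section \<open>Weight one\<close>

lemma inverse_square_tail_le:
  fixes a :: real
  assumes "0 < a"
  shows "summable (\<lambda>j::nat. (1 / (2 * real j + a + 1)) ^ 2)"
    and "(\<Sum>j. (1 / (2 * real j + a + 1)) ^ 2) \<le> 1 / a"
proof -
  define h where "h j = 1 / (2 * real j + a)" for j :: nat
  have "h \<longlonglongrightarrow> 0"
    unfolding h_def by real_asymp
  then have tel: "(\<lambda>j. h j - h (Suc j)) sums h 0"
    using telescope_sums' by fastforce
  have le: "(1 / (2 * real j + a + 1)) ^ 2 \<le> h j - h (Suc j)" for j
  proof -
    define x where "x = 2 * real j + a"
    have x: "0 < x"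
      unfolding x_def using assms by simp
    have "(1 / (x + 1)) ^ 2 = 1 / ((x + 1) * (x + 1))"
      by (simp add: power2_eq_square)
    also have "\<dots> \<le> 2 / (x * (x + 2))"
      using x by (intro frac_le) (auto simp: algebra_simps intro: add_pos_pos)
    also have "\<dots> = 1 / x - 1 / (x + 2)"
      using x by (simp add: field_simps)
    finally show ?thesis
      unfolding h_def x_def by (simp add: algebra_simps)
  qed
  show sm: "summable (\<lambda>j::nat. (1 / (2 * real j + a + 1)) ^ 2)"
    by (rule summable_comparison_test[OF _ sums_summable[OF tel]]) (use le in auto)
  have "(\<Sum>j. (1 / (2 * real j + a + 1)) ^ 2) \<le> (\<Sum>j. h j - h (Suc j))"
    by (rule suminf_le[OF le sm sums_summable[OF tel]])
  also have "\<dots> = 1 / a"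
    using tel by (simp add: sums_iff h_def)
  finally show "(\<Sum>j. (1 / (2 * real j + a + 1)) ^ 2) \<le> 1 / a" .
qed

lemma summable_on_weighted_inverse_square_tails:
  fixes w a :: "nat \<Rightarrow> real"
  assumes w: "\<And>k. 0 \<le> w k" and a: "\<And>k. 0 < a k" and s: "summable (\<lambda>k. w k / a k)"
  shows "(\<lambda>(k, j). w k * (1 / (2 * real j + a k + 1)) ^ 2) summable_on UNIV"
proof -
  define t where "t k = (\<Sum>j. (1 / (2 * real j + a k + 1)) ^ 2)" for k
  have "summable (\<lambda>k. w k * t k)"
  proof (rule summable_comparison_test[OF _ s])
    have "0 \<le> t k" "t k \<le> 1 / a k" for k
      unfolding t_def using inverse_square_tail_le[OF a] by (auto intro: suminf_nonneg)
    then show "\<exists>N. \<forall>k\<ge>N. norm (w k * t k) \<le> w k / a k"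
      using w by (auto intro!: exI[of _ 0] mult_left_mono[of "t _" "1 / a _", simplified])
  qed
  moreover have "(\<lambda>j. w k * (1 / (2 * real j + a k + 1)) ^ 2) sums (w k * t k)" for k
    unfolding t_def using inverse_square_tail_le(1)[OF a] by (intro sums_mult summable_sums)
  ultimately have "((\<lambda>(k, j). w k * (1 / (2 * real j + a k + 1)) ^ 2) has_sum (\<Sum>k. w k * t k)) UNIV"
    by (intro nonneg_iterated_sums_imp_has_sum summable_sums) (use w in \<open>auto split: prod.splits\<close>)
  then show ?thesis
    by (rule has_sum_imp_summable)
qed

lemma summable_on_triangle_odd_even_term_one:
  "odd_even_term 1 summable_on {(k, m). k \<le> m}"
proof -
  have "summable (\<lambda>k. 1 / (2 * real k + 1) / (2 * real k + 1))"
    using summable_one_over_linear_power[of 2 1] by (simp add: power2_eq_square)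
  then have "(\<lambda>(k, j). 1 / (2 * real k + 1) * (1 / (2 * real j + (2 * real k + 1) + 1)) ^ 2)
      summable_on UNIV"
    by (intro summable_on_weighted_inverse_square_tails) auto
  then show ?thesis
    by (subst summable_on_reindex_bij_witness[where j = "\<lambda>(k, m). (k, m - k)" and i = "\<lambda>(k, j). (k, j + k)"
          and T = UNIV and h = "\<lambda>(k, j). 1 / (2 * real k + 1) * (1 / (2 * real j + (2 * real k + 1) + 1)) ^ 2"])
      (auto simp: odd_even_term_def algebra_simps)
qed

text \<open>The convergent companion kernel x(k) y(m) / (2k+2m+3): its rows and antidiagonals
  produce the harmonic tails T_e and B of the class N = 2n + 1, while the rows of the symmetrised
  triangle sum produce T_o.\<close>

definition odd_even_mixed_term :: "nat \<times> nat \<Rightarrow> real" where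
  "odd_even_mixed_term = (\<lambda>(k, m). 1 / (2 * real k + 1) * (1 / (2 * real m + 2) * (1 / (2 * real k + 2 * real m + 3))))"

lemma odd_even_mixed_term_nonneg: "0 \<le> odd_even_mixed_term x"
  by (auto simp: odd_even_mixed_term_def split: prod.splits)

lemma summable_on_odd_even_mixed_term: "odd_even_mixed_term summable_on UNIV"
proof -
  have "summable (\<lambda>k. 1 / (2 * real k + 1) / (2 * real k + 2))"
  proof (rule summable_comparison_test[OF _ summable_one_over_linear_power[of 2 1]])
    show "\<exists>N. \<forall>k\<ge>N. norm (1 / (2 * real k + 1) / (2 * real k + 2)) \<le> (1 / (2 * real k + 1)) ^ 2"
      by (auto simp: power2_eq_square intro!: exI[of _ 0] divide_left_mono)
  qed auto
  then have odd: "(\<lambda>(k, j). 1 / (2 * real k + 1) * (1 / (2 * real j + (2 * real k + 2) + 1)) ^ 2)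
      summable_on UNIV"
    by (intro summable_on_weighted_inverse_square_tails) auto
  have "summable (\<lambda>m. 1 / (2 * real m + 2) / (2 * real m + 2))"
    using summable_one_over_linear_power[of 2 2] by (simp add: power2_eq_square)
  then have "(\<lambda>(m, j). 1 / (2 * real m + 2) * (1 / (2 * real j + (2 * real m + 2) + 1)) ^ 2)
      summable_on UNIV"
    by (intro summable_on_weighted_inverse_square_tails) auto
  then have even: "(\<lambda>(k, m). 1 / (2 * real m + 2) * (1 / (2 * real k + (2 * real m + 2) + 1)) ^ 2)
      summable_on UNIV"
    using summable_on_swap[of "\<lambda>(m, j). 1 / (2 * real m + 2) * (1 / (2 * real j + (2 * real m + 2) + 1)) ^ 2"
        UNIV UNIV]
    by (simp add: case_prod_unfold)
  have "odd_even_mixed_term (k, m)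
      = (\<lambda>(k, j). 1 / (2 * real k + 1) * (1 / (2 * real j + (2 * real k + 2) + 1)) ^ 2) (k, m)
        + (\<lambda>(k, m). 1 / (2 * real m + 2) * (1 / (2 * real k + (2 * real m + 2) + 1)) ^ 2) (k, m)" for k m
    using partial_fraction_symmetric[of "2 * real k + 1" "2 * real m + 2"]
    by (simp add: odd_even_mixed_term_def algebra_simps)
  then have "odd_even_mixed_term
      = (\<lambda>x. (\<lambda>(k, j). 1 / (2 * real k + 1) * (1 / (2 * real j + (2 * real k + 2) + 1)) ^ 2) x
        + (\<lambda>(k, m). 1 / (2 * real m + 2) * (1 / (2 * real k + (2 * real m + 2) + 1)) ^ 2) x)"
    by (simp only: fun_eq_iff split_paired_All simp_thms)
  with summable_on_add[OF odd even] show ?thesis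
    by simp
qed

lemma has_sum_symmetrised_triangle:
  assumes "(odd_even_term 1 has_sum W) {(k, m). k \<le> m}"
  shows "((\<lambda>(n, k). 1 / (2 * real n + 1) * (1 / (2 * real k + 1) * (1 / (2 * real n + 2 * real k + 2))))
    has_sum 2 * W) UNIV"
proof -
  let ?g = "\<lambda>(n, k). odd_even_term 1 (k, n + k)"
  have "(?g has_sum W) UNIV"
    using assms by (simp add: has_sum_upper_triangle_iff)
  moreover from this have "((\<lambda>(n, k). ?g (k, n)) has_sum W) UNIV"
    using has_sum_swap[where f = ?g and S = W and A = UNIV and B = UNIV] by (simp add: case_prod_unfold)
  ultimately have "((\<lambda>x. ?g x + (\<lambda>(n, k). ?g (k, n)) x) has_sum W + W) UNIV"
    by (rule has_sum_add)
  moreover have "?g (n, k) + (\<lambda>(n, k). ?g (k, n)) (n, k)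
      = 1 / (2 * real n + 1) * (1 / (2 * real k + 1) * (1 / (2 * real n + 2 * real k + 2)))" for n k
    using partial_fraction_symmetric[of "2 * real n + 1" "2 * real k + 1"]
    by (simp add: odd_even_term_def algebra_simps)
  ultimately show ?thesis
    by (simp add: case_prod_unfold)
qed

lemma odd_even_mixed_term_antidiagonal:
  assumes "k < n"
  shows "odd_even_mixed_term (k, n - 1 - k)
    = 1 / (2 * real n + 1) * (1 / (2 * real n + 1)) * (1 / (2 * real k + 1) + 1 / (2 * real n - 2 * real k))"
proof -
  have "odd_even_mixed_term (k, n - 1 - k)
      = 1 / (2 * real n + 1) * (1 / (2 * real k + 1) * (1 / (2 * real n - 2 * real k)))"
    unfolding odd_even_mixed_term_def using assms by (simp add: of_nat_diff algebra_simps)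
  also have "1 / (2 * real k + 1) * (1 / (2 * real n - 2 * real k))
      = 1 / (2 * real n + 1) * (1 / (2 * real k + 1) + 1 / (2 * real n - 2 * real k))"
    by (rule partial_fraction_add) (use assms in auto)
  finally show ?thesis
    by (simp only: mult.assoc)
qed

lemma diagonal_sums_identity_one:
  fixes n :: nat
  defines "e \<equiv> 1 / (2 * real n + 1)"
  defines "H \<equiv> \<lambda>k. e * (1 / (2 * real k + 1) * (1 / (2 * real n + 2 * real k + 2)))"
  shows "summable H" and "summable (\<lambda>m. odd_even_mixed_term (n, m))"
    and "(\<Sum>k. H k) - (\<Sum>k<n. odd_even_mixed_term (k, n - 1 - k)) + (\<Sum>m. odd_even_mixed_term (n, m))
      = e ^ 3"
proof -
  define B where "B = (\<Sum>k<n. 1 / (2 * real k + 1) + 1 / (2 * real n - 2 * real k))"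
  obtain T\<^sub>o T\<^sub>e where To: "(\<lambda>k. 1 / (2 * real n + 2 * real k + 2) - 1 / (2 * real k + 1)) sums T\<^sub>o"
    and Te: "(\<lambda>m. 1 / (2 * real n + 2 * real m + 3) - 1 / (2 * real m + 2)) sums T\<^sub>e"
    and T: "T\<^sub>o + T\<^sub>e + B = - e"
    unfolding B_def e_def by (rule harmonic_tails) simp
  have upper: "1 / (2 * real k + 1) * (1 / (2 * real n + 2 * real k + 2))
      = e * (1 / (2 * real k + 1) - 1 / (2 * real n + 2 * real k + 2))" for k
    unfolding e_def by (rule partial_fraction_diff) auto
  have H_eq: "H = (\<lambda>k. - (e * e) * (1 / (2 * real n + 2 * real k + 2) - 1 / (2 * real k + 1)))"
    unfolding H_def upper by (simp add: algebra_simps)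
  have A: "H sums (- (e * e) * T\<^sub>o)"
    unfolding H_eq by (rule sums_mult[OF To])
  have lower: "1 / (2 * real m + 2) * (1 / (2 * real n + 2 * real m + 3))
      = e * (1 / (2 * real m + 2) - 1 / (2 * real n + 2 * real m + 3))" for m
    unfolding e_def by (rule partial_fraction_diff) auto
  have lower_eq: "(\<lambda>m. odd_even_mixed_term (n, m))
      = (\<lambda>m. - (e * e) * (1 / (2 * real n + 2 * real m + 3) - 1 / (2 * real m + 2)))"
    unfolding odd_even_mixed_term_def case_prod_conv e_def[symmetric] lower by (simp add: algebra_simps)
  have C: "(\<lambda>m. odd_even_mixed_term (n, m)) sums (- (e * e) * T\<^sub>e)"
    unfolding lower_eq by (rule sums_mult[OF Te])
  have antidiagonal: "(\<Sum>k<n. odd_even_mixed_term (k, n - 1 - k)) = e * e * B"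
    unfolding B_def e_def sum_distrib_left
    by (intro sum.cong refl odd_even_mixed_term_antidiagonal) simp
  have "- (e * e) * T\<^sub>o - e * e * B + - (e * e) * T\<^sub>e = - (e * e) * (T\<^sub>o + T\<^sub>e + B)"
    by (simp add: algebra_simps)
  also have "\<dots> = e ^ 3"
    unfolding T by (simp add: power3_eq_cube)
  finally show "summable H" "summable (\<lambda>m. odd_even_mixed_term (n, m))"
    and "(\<Sum>k. H k) - (\<Sum>k<n. odd_even_mixed_term (k, n - 1 - k)) + (\<Sum>m. odd_even_mixed_term (n, m))
      = e ^ 3"
    using A C antidiagonal by (auto simp: sums_iff)
qed

lemma sigma_os_two_one: "sigma_os 2 1 = 2 * dlambda_nat 3"
proof -
  define W where "W = infsum (odd_even_term 1) {(k, m). k \<le> m}"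
  define H where "H = (\<lambda>(n, k). 1 / (2 * real n + 1) * (1 / (2 * real k + 1) * (1 / (2 * real n + 2 * real k + 2))))"
  have hW: "(odd_even_term 1 has_sum W) {(k, m). k \<le> m}"
    unfolding W_def using summable_on_triangle_odd_even_term_one by (rule has_sum_infsum)
  obtain S where hS: "(odd_even_mixed_term has_sum S) UNIV"
    using summable_on_odd_even_mixed_term by (auto simp: summable_on_def)
  have "(\<lambda>n. \<Sum>k. H (n, k)) sums (2 * W)"
  proof (rule has_sum_imp_row_sums)
    show "(H has_sum 2 * W) UNIV"
      unfolding H_def by (rule has_sum_symmetrised_triangle[OF hW])
    show "0 \<le> H x" for x
      unfolding H_def by (auto split: prod.splits)
    show "(\<lambda>k. H (n, k)) sums (\<Sum>k. H (n, k))" for n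
      using diagonal_sums_identity_one(1)[of n] unfolding H_def by (simp add: summable_sums)
  qed
  moreover have "(\<lambda>n. \<Sum>m. odd_even_mixed_term (n, m)) sums S"
    using diagonal_sums_identity_one(2)
    by (intro has_sum_imp_row_sums[OF hS odd_even_mixed_term_nonneg] summable_sums)
  ultimately have "(\<lambda>n. (\<Sum>k. H (n, k)) - (\<Sum>k<n. odd_even_mixed_term (k, n - 1 - k))
      + (\<Sum>m. odd_even_mixed_term (n, m))) sums (2 * W - S + S)"
    by (intro sums_add sums_diff has_sum_imp_antidiagonal_sums hS)
  moreover have "(\<lambda>n. (1 / (2 * real n + 1)) ^ 3) sums dlambda_nat 3"
    by (rule dlambda_nat_sums) simp
  ultimately have "2 * W = dlambda_nat 3"
    using diagonal_sums_identity_one(3) sums_unique2 unfolding H_def by fastforce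
  with sigma_os_two_eq_triangle_sum[OF hW] show ?thesis
    by simp
qed

lemma sum_parity_weighted_reindex:
  fixes L :: "nat \<Rightarrow> real"
  shows "(\<Sum>i<2 * m. real (2 * m - i) * ((- 1) ^ i + 1) * L (i + 2) * L (2 * m + 1 - i))
    = 4 * (\<Sum>j=1..m. real j * L (2 * (m + 1) - 2 * j) * L (2 * j + 1))"
proof -
  define g where "g k = 2 * real (2 * m - 2 * k) * L (2 * k + 2) * L (2 * m + 1 - 2 * k)" for k
  have "(\<Sum>i<2 * m. real (2 * m - i) * ((- 1) ^ i + 1) * L (i + 2) * L (2 * m + 1 - i)) = (\<Sum>k<m. g k)"
    unfolding sum_lessThan_double g_def by (intro sum.cong) auto
  also have "\<dots> = (\<Sum>k<m. g (m - Suc k))"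
    by (rule sum.nat_diff_reindex[symmetric])
  also have "\<dots> = (\<Sum>k<m. 4 * (real (Suc k) * L (2 * (m + 1) - 2 * Suc k) * L (2 * Suc k + 1)))"
  proof (intro sum.cong refl)
    fix k assume "k \<in> {..<m}"
    then have "2 * m - 2 * (m - Suc k) = 2 * Suc k" "2 * (m - Suc k) + 2 = 2 * (m + 1) - 2 * Suc k"
      "2 * m + 1 - 2 * (m - Suc k) = 2 * Suc k + 1"
      by auto
    then show "g (m - Suc k) = 4 * (real (Suc k) * L (2 * (m + 1) - 2 * Suc k) * L (2 * Suc k + 1))"
      unfolding g_def by simp
  qed
  also have "\<dots> = 4 * (\<Sum>j=1..m. real j * L (2 * (m + 1) - 2 * j) * L (2 * j + 1))"
    by (simp add: sum_distrib_left sum.atLeast1_atMost_eq)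
  finally show ?thesis .
qed

lemma sigma_os_two_odd:
  assumes "1 \<le> a"
  shows "sigma_os 2 (2 * a - 1) = 2 * real a * (2 * real a - 1) * dlambda_nat (2 * a + 1)
    - 8 * (\<Sum>j=1..a-1. real j * dlambda_nat (2 * a - 2 * j) * dlambda_nat (2 * j + 1))"
proof (cases "a = 1")
  case True
  then show ?thesis
    using sigma_os_two_one by simp
next
  case False
  define m where "m = a - 1"
  have a: "a = m + 1" "1 \<le> m"
    unfolding m_def using assms False by auto
  have "sigma_os 2 (Suc (2 * m)) = real ((2 * m + 1) * (2 * m + 2)) * dlambda_nat (2 * m + 3)
      - 2 * (\<Sum>i<2 * m. real (2 * m - i) * ((- 1) ^ i + 1) * dlambda_nat (i + 2)
        * dlambda_nat (2 * m + 1 - i))"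
    using a(2) by (intro sigma_os_two_Suc_even) auto
  also have "(\<Sum>i<2 * m. real (2 * m - i) * ((- 1) ^ i + 1) * dlambda_nat (i + 2)
        * dlambda_nat (2 * m + 1 - i))
      = 4 * (\<Sum>j=1..m. real j * dlambda_nat (2 * (m + 1) - 2 * j) * dlambda_nat (2 * j + 1))"
    by (rule sum_parity_weighted_reindex)
  finally have "sigma_os 2 (2 * a - 1) = real ((2 * m + 1) * (2 * m + 2)) * dlambda_nat (2 * a + 1)
      - 8 * (\<Sum>j=1..a-1. real j * dlambda_nat (2 * a - 2 * j) * dlambda_nat (2 * j + 1))"
    unfolding a(1) by (simp add: eval_nat_numeral)
  moreover have "real ((2 * m + 1) * (2 * m + 2)) = 2 * real a * (2 * real a - 1)"
    unfolding a(1) by (simp add: algebra_simps)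
  ultimately show ?thesis
    by simp
qed

theorem mainTheorem6:
  fixes a :: nat
  assumes "a \<ge> 1"
  shows "sigma_os 2 (2 * a - 1) =
    2 * real a * (2 * real a - 1) * dlambda (2 * real a + 1)
    - 8 * (\<Sum>j=1..a-1. real j * dlambda (2 * real a - 2 * real j) * dlambda (2 * real j + 1))"
proof -
  have dlambda_odd: "dlambda (2 * real j + 1) = dlambda_nat (2 * j + 1)" for j
    using dlambda_of_nat[of "2 * j + 1"] by (simp add: add.commute)
  have "dlambda (2 * real a - 2 * real j) = dlambda_nat (2 * a - 2 * j)" if "j \<in> {1..a-1}" for j
  proof -
    from that have "2 * j \<le> 2 * a"
      by auto
    then show ?thesis
      using dlambda_of_nat[of "2 * a - 2 * j"] by (simp add: of_nat_diff)
  qed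
  then have "(\<Sum>j=1..a-1. real j * dlambda (2 * real a - 2 * real j) * dlambda (2 * real j + 1))
      = (\<Sum>j=1..a-1. real j * dlambda_nat (2 * a - 2 * j) * dlambda_nat (2 * j + 1))"
    by (intro sum.cong refl) (simp add: dlambda_odd)
  with sigma_os_two_odd[OF assms] show ?thesis
    by (simp add: dlambda_odd)
qed

end
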